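(* Let $L\ge6$ be an even integer, let $\xi=(\xi_k)$ be i.i.d. $N(0,1)$, and let $X=(X_k,k\in\mathbb Z)$ be a sequence of real random variables with finite $L$-th moments such that for every integer $n\ge0$ and every integer $h\ge 4L^{n+1}$, $$E[S(X,h)/\sqrt h]^L\le h^{-L/2}\sum_{j=1}^h\binom hj\left(\tfrac12\right)^hE(S(\xi,j))^L-h^{-L/2}\cdot L!\cdot2^{-L}\cdot(L^n)^{L/2}\sum_{j=2L^{n+1}}^h\binom hj\left(\tfrac12\right)^h.$$ Then for every integer $h\ge 4L$, $$E[S(X,h)/\sqrt h]^L\le h^{-L/2}\sum_{j=1}^h\binom hj\left(\tfrac12\right)^hE(S(\xi,j))^L-2^{-(5L+2)/2}\cdot L!\cdot L^{-L}.$$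
   Context: $S(X,h):=X_1+\dots+X_h$, and similarly for $\xi$. *)

theory Defs
  imports "HOL-Probability.Probability"
begin

definition S :: "(int \<Rightarrow> 'a \<Rightarrow> real) \<Rightarrow> nat \<Rightarrow> 'a \<Rightarrow> real" where
  "S X h = (\<lambda>\<omega>. \<Sum>k=1..h. X (int k) \<omega>)"

end

theory Submission
  imports Defs
begin

text \<open>
  The theorem follows from the hypothesis by choosing, for a given h \<ge> 4L, the scale n with
  4 L^(n+1) \<le> h < 4 L^(n+2), and showing that the subtracted term in the hypothesis at this scale
  is at least the uniform constant 2^(-(5L+2)/2) L! L^(-L).  Three elementary facts do this:

  \<^item> the upper half of a binomial distribution carries mass at least 1/2, so the tail sum
    over j \<ge> 2 L^(n+1) (which is \<le> h/2) is at least 1/2;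
  \<^item> every h \<ge> c L (with L \<ge> 2) lies in a window c L^(n+1) \<le> h < c L^(n+2);
  \<^item> on such a window, h^(-p) (L^n)^p \<ge> 2^(-2p) L^(-2p), i.e. the normalisation loses at most
    a factor depending on L only (used with p = L/2).

  The argument is purely numerical:
  the probabilistic assumptions on X and \<xi> only guarantee that both sides are meaningful.
\<close>

text \<open>Binomial symmetry: the coefficients below index m are dominated by those from h - m on,
  so for 2m \<le> h the upper tail from m on carries at least half of the total 2^h.\<close>
lemma binomial_upper_tail_half:
  fixes h m :: nat
  assumes "2 * m \<le> h"
  shows "1 / 2 \<le> (\<Sum>j=m..h. real (h choose j) * (1/2) ^ h)"
proof -
  have "(\<Sum>j<m. h choose j) = (\<Sum>i\<in>(\<lambda>j. h - j) ` {..<m}. h choose i)"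
  proof (subst sum.reindex)
    show "inj_on (\<lambda>j. h - j) {..<m}" by (rule inj_onI) (use assms in auto)
    show "(\<Sum>j<m. h choose j) = sum ((choose) h \<circ> (\<lambda>j. h - j)) {..<m}"
      by (rule sum.cong) (use assms in \<open>auto intro: binomial_symmetric\<close>)
  qed
  also have "\<dots> \<le> (\<Sum>j=m..h. h choose j)"
    by (rule sum_mono2) (use assms in auto)
  finally have lower_le_upper: "(\<Sum>j<m. h choose j) \<le> (\<Sum>j=m..h. h choose j)" .
  have "{..h} = {..<m} \<union> {m..h}" using assms by auto
  hence "(2::nat) ^ h = (\<Sum>j<m. h choose j) + (\<Sum>j=m..h. h choose j)"
    by (simp add: choose_row_sum[symmetric] sum.union_disjoint[symmetric] ivl_disj_int)
  hence "real (2 ^ h) \<le> 2 * real (\<Sum>j=m..h. h choose j)"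
    using lower_le_upper by linarith
  hence "1 / 2 \<le> (1/2) ^ h * real (\<Sum>j=m..h. h choose j)"
    by (simp add: field_simps)
  also have "\<dots> = (\<Sum>j=m..h. real (h choose j) * (1/2) ^ h)"
    by (simp add: sum_distrib_left mult.commute)
  finally show ?thesis .
qed

lemma geometric_window:
  fixes L c h :: nat
  assumes "L \<ge> 2" and "c > 0" and "h \<ge> c * L"
  shows "\<exists>n. c * L ^ (n + 1) \<le> h \<and> h < c * L ^ (n + 2)"
proof -
  have "h < 2 ^ h" by (rule less_exp)
  also have "\<dots> \<le> L ^ h" using assms(1) by (simp add: power_mono)
  also have "\<dots> \<le> c * L ^ (h + 1)" using assms(1,2) by simp
  finally have ex: "\<exists>k. \<not> c * L ^ (k + 1) \<le> h" by (intro exI[of _ h]) simp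
  define k where "k = (LEAST k. \<not> c * L ^ (k + 1) \<le> h)"
  have above: "\<not> c * L ^ (k + 1) \<le> h" unfolding k_def by (rule LeastI_ex[OF ex])
  then obtain n where kn: "k = Suc n" using assms(3) by (cases k) auto
  have "c * L ^ (n + 1) \<le> h"
    using not_less_Least[of n "\<lambda>k. \<not> c * L ^ (k + 1) \<le> h"] kn k_def by auto
  thus ?thesis using above kn by (intro exI[of _ n]) auto
qed

text \<open>On the window x \<le> 4 a^(n+2), the factor x^(-p) (a^n)^p is bounded below independently
  of n: it is at least (4 a^(n+2))^(-p) (a^n)^p = 2^(-2p) a^(-2p).\<close>
lemma window_normalisation_lower:
  fixes a x p :: real and n :: nat
  assumes "a > 0" and "0 < x" and "x \<le> 4 * a ^ (n + 2)" and "p \<ge> 0"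
  shows "2 powr (- 2 * p) * a powr (- 2 * p) \<le> x powr (- p) * (a ^ n) powr p"
proof -
  have four: "(4::real) powr (- p) = 2 powr (- 2 * p)"
    using powr_powr[of 2 2 "- p"] by simp
  have a_pow: "(a ^ k) powr q = a powr (real k * q)" for k q
    using assms(1) by (simp only: powr_realpow[symmetric] powr_powr)
  have split_four: "(4 * a ^ (n + 2)) powr (- p) = 4 powr (- p) * (a ^ (n + 2)) powr (- p)"
    using assms(1) by (simp add: powr_mult)
  have "(4 * a ^ (n + 2)) powr (- p) * (a ^ n) powr p
        = 4 powr (- p) * (a powr (real (n + 2) * - p) * a powr (real n * p))"
    by (simp only: split_four a_pow mult.assoc)
  also have "\<dots> = 4 powr (- p) * a powr (real (n + 2) * - p + real n * p)"
    by (simp only: powr_add)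
  also have "\<dots> = 2 powr (- 2 * p) * a powr (- 2 * p)"
    unfolding four by (simp add: algebra_simps)
  finally have window_end: "(4 * a ^ (n + 2)) powr (- p) * (a ^ n) powr p
                            = 2 powr (- 2 * p) * a powr (- 2 * p)" .
  have "(4 * a ^ (n + 2)) powr (- p) \<le> x powr (- p)"
    using assms by (intro powr_mono2') auto
  hence "(4 * a ^ (n + 2)) powr (- p) * (a ^ n) powr p \<le> x powr (- p) * (a ^ n) powr p"
    by (intro mult_right_mono) auto
  thus ?thesis using window_end by simp
qed

lemma subtracted_term_lower:
  fixes L h n :: nat
  assumes "L \<ge> 1" and window_low: "4 * L ^ (n + 1) \<le> h" and window_high: "h < 4 * L ^ (n + 2)"
  shows "2 powr (- (5 * real L + 2) / 2) * fact L * real L powr (- real L)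
     \<le> real h powr (- real L / 2) * fact L * 2 powr (- real L) * (real (L ^ n)) powr (real L / 2)
           * (\<Sum>j=2 * L ^ (n + 1)..h. real (h choose j) * (1/2) ^ h)"
proof -
  have tail: "1 / 2 \<le> (\<Sum>j=2 * L ^ (n + 1)..h. real (h choose j) * (1/2) ^ h)"
    using window_low by (intro binomial_upper_tail_half) simp
  have "0 < L ^ (n + 1)" using assms(1) by simp
  hence "0 < real h" using window_low by linarith
  moreover have "real h \<le> real (4 * L ^ (n + 2))"
    using window_high by linarith
  ultimately have scale: "2 powr (- real L) * real L powr (- real L)
                          \<le> real h powr (- real L / 2) * (real (L ^ n)) powr (real L / 2)"
    using window_normalisation_lower[of "real L" "real h" n "real L / 2"] assms(1)
    by (simp add: of_nat_power)
  have const: "2 powr (- (5 * real L + 2) / 2) \<le> 2 powr (- real L) * 2 powr (- real L) * (1/2)"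
  proof -
    have "2 powr (- real L) * 2 powr (- real L) * (1/2) = 2 powr (- 2 * real L - 1)"
      by (simp add: powr_add[symmetric] powr_diff)
    moreover have "2 powr (- (5 * real L + 2) / 2) \<le> 2 powr (- 2 * real L - 1)"
      by (rule powr_mono) auto
    ultimately show ?thesis by simp
  qed
  have "2 powr (- (5 * real L + 2) / 2) * fact L * real L powr (- real L)
        \<le> (2 powr (- real L) * 2 powr (- real L) * (1/2)) * fact L * real L powr (- real L)"
    using const by (intro mult_right_mono) auto
  also have "\<dots> = (2 powr (- real L) * real L powr (- real L)) * fact L * 2 powr (- real L) * (1/2)"
    by (simp only: mult_ac)
  also have "\<dots> \<le> (real h powr (- real L / 2) * (real (L ^ n)) powr (real L / 2))
                  * fact L * 2 powr (- real L) * (\<Sum>j=2 * L ^ (n + 1)..h. real (h choose j) * (1/2) ^ h)"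
  proof (rule mult_mono[OF _ tail])
    show "(2 powr (- real L) * real L powr (- real L)) * fact L * 2 powr (- real L)
          \<le> (real h powr (- real L / 2) * (real (L ^ n)) powr (real L / 2)) * fact L * 2 powr (- real L)"
      using scale by (intro mult_right_mono) auto
  qed auto
  finally show ?thesis by (simp only: mult_ac)
qed

theorem lemma5p2:
  fixes M :: "'a measure" and N :: "'b measure"
    and X :: "int \<Rightarrow> 'a \<Rightarrow> real" and \<xi> :: "int \<Rightarrow> 'b \<Rightarrow> real" and L :: nat
  assumes "L \<ge> 6" and "even L"
    and "prob_space N"
    and "prob_space.indep_vars N (\<lambda>_. borel) \<xi> UNIV"
    and "\<And>k. distributed N lborel (\<xi> k) std_normal_density"
    and "prob_space M"
    and "\<And>k. X k \<in> borel_measurable M"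
    and "\<And>k. integrable M (\<lambda>\<omega>. (X k \<omega>) ^ L)"
    and hyp: "\<And>n h. h \<ge> 4 * L ^ (n + 1) \<Longrightarrow>
      prob_space.expectation M (\<lambda>\<omega>. (S X h \<omega> / sqrt (real h)) ^ L)
      \<le> real h powr (- real L / 2) *
           (\<Sum>j=1..h. real (h choose j) * (1/2) ^ h *
               prob_space.expectation N (\<lambda>\<omega>. (S \<xi> j \<omega>) ^ L))
        - real h powr (- real L / 2) * fact L * 2 powr (- real L) * (real (L ^ n)) powr (real L / 2)
           * (\<Sum>j=2 * L ^ (n + 1)..h. real (h choose j) * (1/2) ^ h)"
  shows "\<And>h. h \<ge> 4 * L \<Longrightarrow>
      prob_space.expectation M (\<lambda>\<omega>. (S X h \<omega> / sqrt (real h)) ^ L)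
      \<le> real h powr (- real L / 2) *
           (\<Sum>j=1..h. real (h choose j) * (1/2) ^ h *
               prob_space.expectation N (\<lambda>\<omega>. (S \<xi> j \<omega>) ^ L))
        - 2 powr (- (5 * real L + 2) / 2) * fact L * real L powr (- real L)"
proof -
  fix h :: nat
  assume "h \<ge> 4 * L"
  then obtain n where low: "4 * L ^ (n + 1) \<le> h" and high: "h < 4 * L ^ (n + 2)"
    using geometric_window[of L 4 h] assms(1) by auto
  from hyp[OF low] subtracted_term_lower[OF _ low high] assms(1)
  show "prob_space.expectation M (\<lambda>\<omega>. (S X h \<omega> / sqrt (real h)) ^ L)
      \<le> real h powr (- real L / 2) *
           (\<Sum>j=1..h. real (h choose j) * (1/2) ^ h *
               prob_space.expectation N (\<lambda>\<omega>. (S \<xi> j \<omega>) ^ L))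
        - 2 powr (- (5 * real L + 2) / 2) * fact L * real L powr (- real L)"
    by linarith
qed

end
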